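(* Let $n\ge 2$ and let $S=[A_0,\dots,A_n]$ be a regular $n$-simplex lying in $\mathbb{R}^m$ for some $m\ge n+1$, with edge length $u$ and circumradius $R$. Let $Q_0$ be the reflection of $A_0$ in the affine hull $H_0$ of the facet $[A_1,\dots,A_n]$, and let $\Omega$ be the set of all points $Q\in\mathbb{R}^m$ for which the $n$-simplex $[Q,A_1,\dots,A_n]$ is regular. Then $$\{\|Q-A_0\|:Q\in\Omega\}=\Big[0,\sqrt{\tfrac{2(n+1)}{n}}\,u\Big]=\Big[0,\tfrac{2(n+1)}{n}R\Big],$$ with the extreme values attained at $Q=A_0$ and $Q=Q_0$.
   Context: An $n$-simplex is the convex hull of $n+1$ affinely independent points; it is regular if all its edges have the same length. Its circumradius is the radius of the $(n-1)$-sphere (in its affine hull) through all its vertices. *)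

theory Defs
  imports "HOL-Analysis.Analysis"
begin

definition is_simplex :: "nat \<Rightarrow> (nat \<Rightarrow> 'a::euclidean_space) \<Rightarrow> bool" where
  "is_simplex n A \<longleftrightarrow> inj_on A {0..n} \<and> \<not> affine_dependent (A ` {0..n})"

definition regular_simplex :: "nat \<Rightarrow> (nat \<Rightarrow> 'a::euclidean_space) \<Rightarrow> bool" where
  "regular_simplex n A \<longleftrightarrow> is_simplex n A \<and>
     (\<forall>i\<in>{0..n}. \<forall>j\<in>{0..n}. \<forall>k\<in>{0..n}. \<forall>l\<in>{0..n}.
        i \<noteq> j \<longrightarrow> k \<noteq> l \<longrightarrow> dist (A i) (A j) = dist (A k) (A l))"

definition circumradius :: "nat \<Rightarrow> (nat \<Rightarrow> 'a::euclidean_space) \<Rightarrow> real" where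
  "circumradius n A = (THE r. \<exists>c \<in> affine hull (A ` {0..n}). \<forall>i\<in>{0..n}. dist c (A i) = r)"

definition reflect_in :: "'a::euclidean_space set \<Rightarrow> 'a \<Rightarrow> 'a" where
  "reflect_in H x = 2 *\<^sub>R closest_point H x - x"

end

theory Submission
  imports Defs
begin

text \<open>Let \<open>G\<close> be the centroid of the facet \<open>A\<^sub>1, \<dots>, A\<^sub>n\<close>, whose vertices lie on a sphere
  about \<open>G\<close>. Expanding \<open>\<parallel>Q - A\<^sub>i\<parallel>\<^sup>2\<close> around \<open>G\<close> and summing over \<open>i\<close> (the vectors \<open>A\<^sub>i - G\<close> sum
  to zero) shows that \<open>Q\<close> has edge distance \<open>u\<close> to all \<open>A\<^sub>i\<close> iff \<open>Q - G\<close> is orthogonal to the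
  facet and \<open>\<parallel>Q - G\<parallel> = h = \<parallel>A\<^sub>0 - G\<parallel> = \<surd>((n+1)/(2n)) u\<close>. So \<open>\<Omega>\<close> is a sphere of radius \<open>h\<close>
  about \<open>G\<close> in the orthogonal complement of the facet. As the simplex spans only \<open>n\<close> dimensions
  and \<open>m \<ge> n + 1\<close>, that complement contains a direction orthogonal to \<open>A\<^sub>0 - G\<close> as well, and
  rotating \<open>A\<^sub>0\<close> towards it realises every distance in \<open>[0, 2h]\<close>, the value \<open>2h\<close> at the
  reflection \<open>Q\<^sub>0 = 2G - A\<^sub>0\<close>. The circumcentre is the centroid of all vertices, which gives
  \<open>R = \<surd>(n/(2(n+1))) u\<close>.\<close>

lemma inner_diff_diff_dist:
  fixes x y z :: "'a::real_inner"
  shows "(x - y) \<bullet> (x - z) = ((dist x y)\<^sup>2 + (dist x z)\<^sup>2 - (dist y z)\<^sup>2) / 2"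
  by (simp add: dist_norm power2_norm_eq_inner inner_diff algebra_simps inner_commute)

lemma inner_const_on_affine_hull:
  fixes a :: "'a::real_inner"
  assumes "\<forall>v\<in>S. a \<bullet> v = b" and "x \<in> affine hull S"
  shows "a \<bullet> x = b"
  using hull_minimal[of S "{x. a \<bullet> x = b}" affine] affine_hyperplane assms by auto

definition centroid :: "'i set \<Rightarrow> ('i \<Rightarrow> 'a::real_vector) \<Rightarrow> 'a" where
  "centroid I P = (1 / real (card I)) *\<^sub>R (\<Sum>i\<in>I. P i)"

lemma sum_diff_centroid:
  assumes "finite I" and "I \<noteq> {}"
  shows "(\<Sum>i\<in>I. P i - centroid I P) = 0"
  using assms by (simp add: centroid_def sum_subtractf sum_constant_scaleR)

lemma centroid_in_affine_hull:
  assumes "finite I" and "I \<noteq> {}"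
  shows "centroid I P \<in> affine hull (P ` I)"
proof -
  have "(\<Sum>i\<in>I. (1 / real (card I)) *\<^sub>R P i) \<in> convex hull (P ` I)"
    using assms by (intro convex_sum) (auto intro: hull_inc)
  then show ?thesis
    using convex_hull_subset_affine_hull by (auto simp: centroid_def scaleR_sum_right)
qed

lemma dist_centroid_equilateral:
  fixes P :: "'i \<Rightarrow> 'a::real_inner"
  assumes "finite I" and "i \<in> I"
    and equi: "\<forall>j\<in>I. \<forall>l\<in>I. j \<noteq> l \<longrightarrow> dist (P j) (P l) = u"
  shows "(dist (P i) (centroid I P))\<^sup>2 = (real (card I) - 1) / (2 * real (card I)) * u\<^sup>2"
proof -
  define k where "k = real (card I)"
  have k: "k > 0" using assms card_gt_0_iff unfolding k_def by auto
  define D where "D j l = (dist (P j) (P l))\<^sup>2" for j l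
  have D: "D j l = u\<^sup>2 - (if l = j then u\<^sup>2 else 0)" if "j \<in> I" "l \<in> I" for j l
    using equi that by (auto simp: D_def)
  have row: "(\<Sum>l\<in>I. D j l) = (k - 1) * u\<^sup>2" if "j \<in> I" for j
    using that assms(1) by (simp add: D sum_subtractf k_def algebra_simps)
  have "P i - centroid I P = (1 / k) *\<^sub>R (\<Sum>j\<in>I. P i - P j)"
    using k by (simp add: centroid_def sum_subtractf k_def scaleR_diff_right sum_constant_scaleR)
  then have "(dist (P i) (centroid I P))\<^sup>2
      = (1 / k)\<^sup>2 * ((\<Sum>j\<in>I. P i - P j) \<bullet> (\<Sum>l\<in>I. P i - P l))"
    by (simp add: dist_norm power_divide power2_abs flip: power2_norm_eq_inner)
  also have "(\<Sum>j\<in>I. P i - P j) \<bullet> (\<Sum>l\<in>I. P i - P l)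
      = (\<Sum>j\<in>I. \<Sum>l\<in>I. (P i - P j) \<bullet> (P i - P l))"
    unfolding inner_sum_left by (simp only: inner_sum_right)
  also have "(\<Sum>j\<in>I. \<Sum>l\<in>I. (P i - P j) \<bullet> (P i - P l))
      = (\<Sum>j\<in>I. \<Sum>l\<in>I. (D i j + D i l - D j l) / 2)"
    by (simp add: inner_diff_diff_dist D_def)
  also have "\<dots> = (\<Sum>j\<in>I. k / 2 * D i j)"
    using row assms(2) by (intro sum.cong refl) (simp add: sum.distrib sum_subtractf k_def flip: sum_divide_distrib)
  also have "\<dots> = k * (k - 1) / 2 * u\<^sup>2"
    by (simp only: row[OF assms(2)] flip: sum_distrib_left) simp
  also have "(1 / k)\<^sup>2 * \<dots> = (k - 1) / (2 * k) * u\<^sup>2"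
    using k by (simp add: field_simps power2_eq_square)
  finally show ?thesis by (simp add: k_def)
qed

lemma dist_all_eq_iff_orthogonal:
  fixes P :: "'i \<Rightarrow> 'a::real_inner"
  assumes "finite I" and "I \<noteq> {}"
    and sum0: "(\<Sum>i\<in>I. P i - G) = 0" and rho: "\<forall>i\<in>I. dist (P i) G = \<rho>" and "d \<ge> 0"
  shows "(\<forall>i\<in>I. dist Q (P i) = d) \<longleftrightarrow>
           (\<forall>i\<in>I. (Q - G) \<bullet> (P i - G) = 0) \<and> (dist Q G)\<^sup>2 + \<rho>\<^sup>2 = d\<^sup>2"
proof -
  have expand: "(dist Q (P i))\<^sup>2 = (dist Q G)\<^sup>2 + \<rho>\<^sup>2 - 2 * ((Q - G) \<bullet> (P i - G))"
    if "i \<in> I" for i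
    using inner_diff_diff_dist[of G Q "P i"] rho that
    by (simp add: dist_commute inner_diff algebra_simps)
  have "(\<Sum>i\<in>I. (Q - G) \<bullet> (P i - G)) = 0"
    using sum0 by (simp flip: inner_sum_right)
  then have sum_sq: "(\<Sum>i\<in>I. (dist Q (P i))\<^sup>2) = real (card I) * ((dist Q G)\<^sup>2 + \<rho>\<^sup>2)"
    by (simp add: expand sum_subtractf flip: sum_distrib_left)
  show ?thesis
  proof
    assume d: "\<forall>i\<in>I. dist Q (P i) = d"
    then have "real (card I) * d\<^sup>2 = real (card I) * ((dist Q G)\<^sup>2 + \<rho>\<^sup>2)"
      using sum_sq by simp
    then have "(dist Q G)\<^sup>2 + \<rho>\<^sup>2 = d\<^sup>2"
      using assms(1,2) by simp
    then show "(\<forall>i\<in>I. (Q - G) \<bullet> (P i - G) = 0) \<and> (dist Q G)\<^sup>2 + \<rho>\<^sup>2 = d\<^sup>2"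
      using d expand by auto
  next
    assume "(\<forall>i\<in>I. (Q - G) \<bullet> (P i - G) = 0) \<and> (dist Q G)\<^sup>2 + \<rho>\<^sup>2 = d\<^sup>2"
    then show "\<forall>i\<in>I. dist Q (P i) = d"
      using expand \<open>d \<ge> 0\<close> by (simp add: power2_eq_iff_nonneg)
  qed
qed

lemma closest_point_affine_hull_orthogonal:
  fixes x G :: "'a::euclidean_space"
  assumes "G \<in> affine hull S" and orth: "\<forall>v\<in>S. (x - G) \<bullet> (v - G) = 0"
  shows "closest_point (affine hull S) x = G"
proof (rule closest_point_unique[symmetric])
  show "\<forall>z\<in>affine hull S. dist x G \<le> dist x z"
  proof
    fix z assume "z \<in> affine hull S"
    then have "(x - G) \<bullet> z = (x - G) \<bullet> G"
      using orth by (intro inner_const_on_affine_hull) (auto simp: inner_diff_right)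
    then have "(dist x z)\<^sup>2 = (dist x G)\<^sup>2 + (dist G z)\<^sup>2"
      by (simp add: dist_norm power2_norm_eq_inner inner_diff algebra_simps inner_commute)
    then show "dist x G \<le> dist x z"
      by (simp add: power2_le_imp_le)
  qed
qed (use assms in \<open>auto simp: convex_affine_hull closed_affine_hull\<close>)

lemma equidistant_affine_hull_unique:
  fixes c c' :: "'a::real_inner"
  assumes "c \<in> affine hull S" "c' \<in> affine hull S"
    and "\<forall>v\<in>S. dist c v = r" "\<forall>v\<in>S. dist c' v = r'"
  shows "c = c'"
proof -
  define b where "b = (r'\<^sup>2 - r\<^sup>2 + c \<bullet> c - c' \<bullet> c') / 2"
  have "(c - c') \<bullet> v = b" if "v \<in> S" for v
  proof -
    have "(c - v) \<bullet> (c - v) = r\<^sup>2" "(c' - v) \<bullet> (c' - v) = r'\<^sup>2"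
      using assms(3,4) that by (auto simp: dist_norm simp flip: power2_norm_eq_inner)
    then show ?thesis
      by (simp add: b_def inner_diff algebra_simps inner_commute)
  qed
  then have "(c - c') \<bullet> c = b" "(c - c') \<bullet> c' = b"
    using assms(1,2) by (auto intro: inner_const_on_affine_hull)
  then have "(c - c') \<bullet> (c - c') = 0"
    by (simp add: inner_diff_right)
  then show ?thesis by simp
qed

lemma circumradius_eqI:
  fixes A :: "nat \<Rightarrow> 'a::euclidean_space"
  assumes "c \<in> affine hull (A ` {0..n})" and "\<forall>i\<in>{0..n}. dist c (A i) = r"
  shows "circumradius n A = r"
  unfolding circumradius_def
proof (rule the_equality)
  show "\<exists>c\<in>affine hull (A ` {0..n}). \<forall>i\<in>{0..n}. dist c (A i) = r"
    using assms by blast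
next
  fix r' assume "\<exists>c'\<in>affine hull (A ` {0..n}). \<forall>i\<in>{0..n}. dist c' (A i) = r'"
  then obtain c' where "c' \<in> affine hull (A ` {0..n})" "\<forall>i\<in>{0..n}. dist c' (A i) = r'"
    by blast
  moreover from this have "c' = c"
    using assms by (intro equidistant_affine_hull_unique[of c' _ c]) auto
  ultimately show "r' = r"
    using assms(2) by auto
qed

lemma dist_image_sphere_orthogonal:
  fixes P G :: "'a::euclidean_space"
  assumes orth: "\<forall>w\<in>W. (P - G) \<bullet> w = 0" and dim: "dim (insert (P - G) W) < DIM('a)"
  shows "(\<lambda>Q. dist Q P) ` {Q. (\<forall>w\<in>W. (Q - G) \<bullet> w = 0) \<and> dist Q G = dist P G}
           = {0 .. 2 * dist P G}"
proof
  define h where "h = dist P G"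
  show "(\<lambda>Q. dist Q P) ` {Q. (\<forall>w\<in>W. (Q - G) \<bullet> w = 0) \<and> dist Q G = dist P G} \<subseteq> {0 .. 2 * h}"
  proof clarsimp
    fix Q assume "dist Q G = dist P G"
    then show "dist Q P \<le> 2 * h"
      using dist_triangle[of Q P G] by (simp add: h_def dist_commute)
  qed
  obtain f where "f \<noteq> 0" and f: "span (insert (P - G) W) \<subseteq> {x. f \<bullet> x = 0}"
    using lowdim_subset_hyperplane[OF dim] by blast
  define e where "e = P - G"
  define f' where "f' = (h / norm f) *\<^sub>R f"
  have f'f': "f' \<bullet> f' = h\<^sup>2"
    using \<open>f \<noteq> 0\<close> by (simp add: f'_def power2_eq_square flip: power2_norm_eq_inner)
  have f'e: "f' \<bullet> e = 0" and f'W: "\<forall>w\<in>W. f' \<bullet> w = 0"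
    using f span_base[of _ "insert (P - G) W"] by (auto simp: f'_def e_def)
  have ee: "e \<bullet> e = h\<^sup>2"
    by (simp add: h_def e_def dist_norm power2_norm_eq_inner)
  have sq: "(x *\<^sub>R e + y *\<^sub>R f') \<bullet> (x *\<^sub>R e + y *\<^sub>R f') = (x\<^sup>2 + y\<^sup>2) * h\<^sup>2" for x y
    using ee f'f' f'e
    by (simp add: inner_add_left inner_add_right inner_commute power2_eq_square algebra_simps)
  show "{0 .. 2 * h} \<subseteq> (\<lambda>Q. dist Q P) ` {Q. (\<forall>w\<in>W. (Q - G) \<bullet> w = 0) \<and> dist Q G = dist P G}"
  proof
    fix t assume t: "t \<in> {0 .. 2 * h}"
    \<comment> \<open>rotate \<open>P\<close> about \<open>G\<close> in the plane spanned by \<open>P - G\<close> and \<open>f'\<close>; \<open>a\<close> is the cosine of the angle\<close>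
    define a where "a = 1 - t\<^sup>2 / (2 * h\<^sup>2)"
    define b where "b = sqrt (1 - a\<^sup>2)"
    define Q where "Q = G + (a *\<^sub>R e + b *\<^sub>R f')"
    have "t\<^sup>2 \<le> (2 * h)\<^sup>2"
      using t by (intro power_mono) auto
    then have "t\<^sup>2 / (2 * h\<^sup>2) \<le> 2"
      by (cases "h = 0") (simp_all add: divide_simps power2_eq_square)
    moreover have "t\<^sup>2 / (2 * h\<^sup>2) \<ge> 0"
      by simp
    ultimately have "\<bar>a\<bar> \<le> 1"
      by (simp add: a_def abs_le_iff)
    then have ab: "a\<^sup>2 + b\<^sup>2 = 1"
      by (simp add: b_def abs_square_le_1)
    have "Q - P = (a - 1) *\<^sub>R e + b *\<^sub>R f'"
      by (simp add: Q_def e_def algebra_simps)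
    then have "(dist Q P)\<^sup>2 = ((a - 1)\<^sup>2 + b\<^sup>2) * h\<^sup>2"
      using sq[of "a - 1" b] by (simp add: dist_norm power2_norm_eq_inner)
    also have "\<dots> = t\<^sup>2"
    proof (cases "h = 0")
      case False
      have "(a - 1)\<^sup>2 + b\<^sup>2 = 2 - 2 * a"
        using ab by (simp add: power2_diff)
      then show ?thesis
        using False by (simp add: a_def)
    qed (use t in simp)
    finally have "dist Q P = t"
      using t by (simp add: power2_eq_iff_nonneg)
    moreover have "(dist Q G)\<^sup>2 = h\<^sup>2"
      using sq[of a b] ab by (simp add: Q_def dist_norm power2_norm_eq_inner)
    then have "dist Q G = h"
      by (simp add: h_def power2_eq_iff_nonneg)
    moreover have "\<forall>w\<in>W. (Q - G) \<bullet> w = 0"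
      using orth f'W by (simp add: Q_def e_def inner_add_left)
    ultimately show "t \<in> (\<lambda>Q. dist Q P) ` {Q. (\<forall>w\<in>W. (Q - G) \<bullet> w = 0) \<and> dist Q G = dist P G}"
      by (auto simp: h_def)
  qed
qed

lemma dim_diffs_affine_hull_less_card:
  assumes "finite S" "S \<noteq> {}"
    and "\<forall>v\<in>V. \<exists>x\<in>affine hull S. \<exists>y\<in>affine hull S. v = x - y"
  shows "dim V < card S"
proof -
  obtain a where "a \<in> S" using assms(2) by blast
  have "V \<subseteq> span ((\<lambda>z. z - a) ` (S - {a}))"
  proof
    fix v assume "v \<in> V"
    then obtain x y where "x \<in> affine hull S" "y \<in> affine hull S" "v = x - y"
      using assms(3) by blast
    then show "v \<in> span ((\<lambda>z. z - a) ` (S - {a}))"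
      unfolding affine_hull_span[OF \<open>a \<in> S\<close>] by (auto simp: setcompr_eq_image set_diff_eq intro: span_diff)
  qed
  then have "dim V \<le> card ((\<lambda>z. z - a) ` (S - {a}))"
    using assms(1) by (intro dim_le_card) auto
  also have "\<dots> \<le> card (S - {a})"
    using assms(1) by (intro card_image_le) auto
  also have "\<dots> < card S"
    using assms(1) \<open>a \<in> S\<close> by (rule card_Diff1_less)
  finally show ?thesis .
qed

lemma eq_sqrt_mult_if_power2_eq:
  fixes x y c :: real
  assumes "x\<^sup>2 = c * y\<^sup>2" and "0 \<le> x" and "0 \<le> y"
  shows "x = sqrt c * y"
proof -
  have "x = sqrt (x\<^sup>2)"
    using \<open>0 \<le> x\<close> by simp
  also have "\<dots> = sqrt c * y"
    using assms by (simp add: real_sqrt_mult)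
  finally show ?thesis .
qed

lemma sqrt_divide_eq_divide_mult_sqrt:
  fixes a x :: real
  assumes "a > 0" and "x > 0"
  shows "sqrt (a / x) = a / x * sqrt (x / a)"
proof -
  have "a / x = (a / x)\<^sup>2 * (x / a)"
    using assms by (simp add: power2_eq_square)
  then show ?thesis
    using assms by (metis real_sqrt_mult real_sqrt_abs abs_of_pos divide_pos_pos)
qed

lemma independent_if_inner_eq:
  fixes a :: "'i \<Rightarrow> 'a::real_inner"
  assumes "finite I" and "c \<noteq> 0"
    and gram: "\<forall>i\<in>I. \<forall>j\<in>I. a i \<bullet> a j = (if i = j then 2 * c else c)"
  shows "independent (a ` I)"
proof (rule real_vector.independent_if_scalars_zero)
  have inj: "inj_on a I"
  proof (rule inj_onI, rule ccontr)
    fix i j assume "i \<in> I" "j \<in> I" "a i = a j" "i \<noteq> j"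
    have "a i \<bullet> a i = 2 * c" "a i \<bullet> a j = c"
      using gram \<open>i \<in> I\<close> \<open>j \<in> I\<close> \<open>i \<noteq> j\<close> by simp_all
    then show False
      using \<open>a i = a j\<close> \<open>c \<noteq> 0\<close> by simp
  qed
  fix f v assume comb: "(\<Sum>v\<in>a ` I. f v *\<^sub>R v) = 0" and "v \<in> a ` I"
  define d where "d i = f (a i)" for i
  have "(\<Sum>i\<in>I. d i *\<^sub>R a i) = 0"
    using comb by (simp add: sum.reindex[OF inj] d_def)
  then have dj: "d j = - sum d I" if "j \<in> I" for j
  proof -
    have "0 = (\<Sum>i\<in>I. d i *\<^sub>R a i) \<bullet> a j"
      using \<open>(\<Sum>i\<in>I. d i *\<^sub>R a i) = 0\<close> by simp
    also have "\<dots> = (\<Sum>i\<in>I. d i * (a i \<bullet> a j))"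
      by (simp add: inner_sum_left)
    also have "\<dots> = (\<Sum>i\<in>I. c * d i + (if i = j then c * d i else 0))"
      using gram that by (intro sum.cong) auto
    also have "\<dots> = c * sum d I + c * d j"
      using that assms(1) by (simp add: sum.distrib sum_distrib_left)
    finally have "c * (sum d I + d j) = 0"
      by (simp add: distrib_left)
    then show ?thesis
      using \<open>c \<noteq> 0\<close> by simp
  qed
  then have "sum d I = (\<Sum>j\<in>I. - sum d I)"
    by (rule sum.cong[OF refl])
  also have "\<dots> = - (real (card I) * sum d I)"
    by simp
  finally have "(1 + real (card I)) * sum d I = 0"
    by algebra
  then have "sum d I = 0"
    by (simp add: add_nonneg_eq_0_iff)
  moreover obtain i where "i \<in> I" "v = a i"
    using \<open>v \<in> a ` I\<close> by blast
  ultimately have "d i = 0"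
    using dj[of i] by linarith
  then show "f v = 0"
    using \<open>v = a i\<close> by (simp add: d_def)
qed (use assms(1) in simp)

lemma equilateral_imp_regular_simplex:
  fixes A :: "nat \<Rightarrow> 'a::euclidean_space"
  assumes "u > 0" and equi: "\<forall>i\<in>{0..n}. \<forall>j\<in>{0..n}. i \<noteq> j \<longrightarrow> dist (A i) (A j) = u"
  shows "regular_simplex n A"
proof -
  have inj: "inj_on A {0..n}"
  proof (rule inj_onI, rule ccontr)
    fix i j assume "i \<in> {0..n}" "j \<in> {0..n}" "A i = A j" "i \<noteq> j"
    then show False
      using equi \<open>u > 0\<close> by force
  qed
  have "(A i - A 0) \<bullet> (A j - A 0) = (if i = j then 2 * (u\<^sup>2 / 2) else u\<^sup>2 / 2)"
    if "i \<in> {1..n}" "j \<in> {1..n}" for i j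
  proof -
    have "(A i - A 0) \<bullet> (A j - A 0) = (A 0 - A i) \<bullet> (A 0 - A j)"
      by (simp add: inner_diff algebra_simps)
    then show ?thesis
      using inner_diff_diff_dist[of "A 0" "A i" "A j"] equi that by (auto simp: dist_commute)
  qed
  then have "independent ((\<lambda>i. A i - A 0) ` {1..n})"
    using \<open>u > 0\<close> by (intro independent_if_inner_eq[where c = "u\<^sup>2 / 2"]) auto
  moreover have "A 0 \<notin> A ` {1..n}"
    using inj_onD[OF inj, of 0] by fastforce
  ultimately have "\<not> affine_dependent (insert (A 0) (A ` {1..n}))"
    by (simp add: affine_dependent_iff_dependent image_image)
  moreover have "{0..n} = insert 0 {1..n}"
    by auto
  ultimately have "\<not> affine_dependent (A ` {0..n})"
    by simp
  then show ?thesis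
    using inj equi unfolding regular_simplex_def is_simplex_def by auto
qed

lemma regular_simplex_dist_eq_edge:
  assumes "regular_simplex n A" and "1 \<le> n"
    and "i \<in> {0..n}" "j \<in> {0..n}" "i \<noteq> j"
  shows "dist (A i) (A j) = dist (A 0) (A 1)"
proof -
  have "(0::nat) \<in> {0..n}" "(1::nat) \<in> {0..n}" "(0::nat) \<noteq> 1"
    using \<open>1 \<le> n\<close> by auto
  then show ?thesis
    using assms unfolding regular_simplex_def by blast
qed

lemma regular_simplex_edge_pos:
  assumes "regular_simplex n A" and "1 \<le> n"
  shows "dist (A 0) (A 1) > 0"
proof -
  have "inj_on A {0..n}"
    using assms(1) unfolding regular_simplex_def is_simplex_def by blast
  then show ?thesis
    using inj_onD[of A "{0..n}" 0 1] \<open>1 \<le> n\<close> by auto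
qed

lemma regular_simplex_fun_upd_iff:
  assumes reg: "regular_simplex n A" and "2 \<le> n"
  shows "regular_simplex n (A(0 := Q)) \<longleftrightarrow> (\<forall>i\<in>{1..n}. dist Q (A i) = dist (A 0) (A 1))"
proof
  assume "regular_simplex n (A(0 := Q))"
  then have "dist Q (A i) = dist (A 1) (A 2)" if "i \<in> {1..n}" for i
    using regular_simplex_dist_eq_edge[of n "A(0 := Q)" 0 i] regular_simplex_dist_eq_edge[of n "A(0 := Q)" 1 2]
      \<open>2 \<le> n\<close> that by auto
  then show "\<forall>i\<in>{1..n}. dist Q (A i) = dist (A 0) (A 1)"
    using regular_simplex_dist_eq_edge[OF reg, of 1 2] \<open>2 \<le> n\<close> by auto
next
  assume Q: "\<forall>i\<in>{1..n}. dist Q (A i) = dist (A 0) (A 1)"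
  have "\<forall>i\<in>{0..n}. \<forall>j\<in>{0..n}. i \<noteq> j \<longrightarrow> dist ((A(0 := Q)) i) ((A(0 := Q)) j) = dist (A 0) (A 1)"
  proof (intro ballI impI)
    fix i j assume ij: "i \<in> {0..n}" "j \<in> {0..n}" "i \<noteq> j"
    consider "i = 0" | "j = 0" | "i \<noteq> 0" "j \<noteq> 0"
      by blast
    then show "dist ((A(0 := Q)) i) ((A(0 := Q)) j) = dist (A 0) (A 1)"
    proof cases
      case 1
      then show ?thesis using Q ij by auto
    next
      case 2
      then show ?thesis using Q ij by (auto simp: dist_commute)
    next
      case 3
      then show ?thesis using regular_simplex_dist_eq_edge[OF reg _ ij] \<open>2 \<le> n\<close> by simp
    qed
  qed
  then show "regular_simplex n (A(0 := Q))"
    using regular_simplex_edge_pos[OF reg] \<open>2 \<le> n\<close> by (intro equilateral_imp_regular_simplex) auto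
qed

lemma regular_simplex_dist_centroid:
  assumes reg: "regular_simplex n A" and "1 \<le> n" and "J \<subseteq> {0..n}" and "i \<in> J"
  shows "(dist (A i) (centroid J A))\<^sup>2
           = (real (card J) - 1) / (2 * real (card J)) * (dist (A 0) (A 1))\<^sup>2"
proof (rule dist_centroid_equilateral)
  show "finite J"
    using \<open>J \<subseteq> {0..n}\<close> by (rule finite_subset) simp
  show "\<forall>j\<in>J. \<forall>l\<in>J. j \<noteq> l \<longrightarrow> dist (A j) (A l) = dist (A 0) (A 1)"
    using \<open>J \<subseteq> {0..n}\<close> regular_simplex_dist_eq_edge[OF reg \<open>1 \<le> n\<close>] by blast
qed (rule \<open>i \<in> J\<close>)

lemma regular_simplex_dist_facet_iff:
  fixes n :: nat and A :: "nat \<Rightarrow> 'a::euclidean_space"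
  defines "G \<equiv> centroid {1..n} A"
  assumes reg: "regular_simplex n A" and "1 \<le> n"
  shows "(\<forall>i\<in>{1..n}. dist Q (A i) = dist (A 0) (A 1)) \<longleftrightarrow>
           (\<forall>i\<in>{1..n}. (Q - G) \<bullet> (A i - G) = 0) \<and>
           (dist Q G)\<^sup>2 = (real n + 1) / (2 * real n) * (dist (A 0) (A 1))\<^sup>2"
proof -
  define u where "u = dist (A 0) (A 1)"
  define \<rho> where "\<rho> = dist (A 1) G"
  have \<rho>2: "(dist (A i) G)\<^sup>2 = (real n - 1) / (2 * real n) * u\<^sup>2" if "i \<in> {1..n}" for i
    using regular_simplex_dist_centroid[OF reg \<open>1 \<le> n\<close>, of "{1..n}" i] that
    by (simp add: G_def u_def)
  have "\<forall>i\<in>{1..n}. dist (A i) G = \<rho>"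
  proof
    fix i assume "i \<in> {1..n}"
    then have "(dist (A i) G)\<^sup>2 = \<rho>\<^sup>2"
      using \<rho>2[of i] \<rho>2[of 1] \<open>1 \<le> n\<close> by (simp add: \<rho>_def)
    then show "dist (A i) G = \<rho>"
      by (simp add: \<rho>_def power2_eq_iff_nonneg)
  qed
  moreover have "(\<Sum>i\<in>{1..n}. A i - G) = 0"
    using \<open>1 \<le> n\<close> unfolding G_def by (intro sum_diff_centroid) auto
  ultimately have "(\<forall>i\<in>{1..n}. dist Q (A i) = u) \<longleftrightarrow>
               (\<forall>i\<in>{1..n}. (Q - G) \<bullet> (A i - G) = 0) \<and> (dist Q G)\<^sup>2 + \<rho>\<^sup>2 = u\<^sup>2"
    using \<open>1 \<le> n\<close> by (intro dist_all_eq_iff_orthogonal) (auto simp: u_def)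
  moreover have "u\<^sup>2 - \<rho>\<^sup>2 = (real n + 1) / (2 * real n) * u\<^sup>2"
    using \<rho>2[of 1] \<open>1 \<le> n\<close> by (simp add: \<rho>_def field_simps)
  then have "(dist Q G)\<^sup>2 + \<rho>\<^sup>2 = u\<^sup>2 \<longleftrightarrow> (dist Q G)\<^sup>2 = (real n + 1) / (2 * real n) * u\<^sup>2"
    by linarith
  ultimately show ?thesis
    by (simp only: u_def)
qed

lemma regular_simplex_fun_upd_iff_sphere:
  fixes n :: nat and A :: "nat \<Rightarrow> 'a::euclidean_space"
  defines "G \<equiv> centroid {1..n} A"
  assumes reg: "regular_simplex n A" and "2 \<le> n"
  shows "regular_simplex n (A(0 := Q)) \<longleftrightarrow>
           (\<forall>i\<in>{1..n}. (Q - G) \<bullet> (A i - G) = 0) \<and> dist Q G = dist (A 0) G"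
proof -
  have "1 \<le> n"
    using \<open>2 \<le> n\<close> by simp
  note facet = regular_simplex_dist_facet_iff[OF reg \<open>1 \<le> n\<close>, folded G_def]
  have "\<forall>i\<in>{1..n}. dist (A 0) (A i) = dist (A 0) (A 1)"
    using \<open>1 \<le> n\<close> by (intro ballI regular_simplex_dist_eq_edge[OF reg]) auto
  then have "(dist (A 0) G)\<^sup>2 = (real n + 1) / (2 * real n) * (dist (A 0) (A 1))\<^sup>2"
    using facet by blast
  then have "(dist Q G)\<^sup>2 = (real n + 1) / (2 * real n) * (dist (A 0) (A 1))\<^sup>2
               \<longleftrightarrow> dist Q G = dist (A 0) G"
    by (metis power2_eq_iff_nonneg zero_le_dist)
  then show ?thesis
    by (simp only: regular_simplex_fun_upd_iff[OF reg \<open>2 \<le> n\<close>] facet)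
qed

lemma regular_simplex_height:
  assumes reg: "regular_simplex n A" and "1 \<le> n"
  shows "dist (A 0) (centroid {1..n} A) = sqrt ((real n + 1) / (2 * real n)) * dist (A 0) (A 1)"
proof -
  have "\<forall>i\<in>{1..n}. dist (A 0) (A i) = dist (A 0) (A 1)"
    using \<open>1 \<le> n\<close> by (intro ballI regular_simplex_dist_eq_edge[OF reg]) auto
  then have "(dist (A 0) (centroid {1..n} A))\<^sup>2 = (real n + 1) / (2 * real n) * (dist (A 0) (A 1))\<^sup>2"
    using regular_simplex_dist_facet_iff[OF reg \<open>1 \<le> n\<close>] by blast
  then show ?thesis
    by (simp add: eq_sqrt_mult_if_power2_eq)
qed

lemma regular_simplex_circumradius:
  assumes reg: "regular_simplex n A" and "1 \<le> n"
  shows "circumradius n A = sqrt (real n / (2 * (real n + 1))) * dist (A 0) (A 1)"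
proof (rule circumradius_eqI)
  show "centroid {0..n} A \<in> affine hull (A ` {0..n})"
    by (rule centroid_in_affine_hull) auto
  show "\<forall>i\<in>{0..n}. dist (centroid {0..n} A) (A i) = sqrt (real n / (2 * (real n + 1))) * dist (A 0) (A 1)"
  proof
    fix i assume "i \<in> {0..n}"
    then have "(dist (A i) (centroid {0..n} A))\<^sup>2 = real n / (2 * (real n + 1)) * (dist (A 0) (A 1))\<^sup>2"
      using regular_simplex_dist_centroid[OF reg \<open>1 \<le> n\<close>, of "{0..n}" i] by simp
    then show "dist (centroid {0..n} A) (A i) = sqrt (real n / (2 * (real n + 1))) * dist (A 0) (A 1)"
      by (simp add: eq_sqrt_mult_if_power2_eq dist_commute)
  qed
qed

lemma regular_simplex_apex_dist_image:
  fixes n :: nat and A :: "nat \<Rightarrow> 'a::euclidean_space"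
  defines "G \<equiv> centroid {1..n} A"
  assumes reg: "regular_simplex n A" and "2 \<le> n" and "n + 1 \<le> DIM('a)"
  shows "(\<lambda>Q. dist Q (A 0)) ` {Q. regular_simplex n (A(0 := Q))} = {0 .. 2 * dist (A 0) G}"
proof -
  define W where "W = (\<lambda>i. A i - G) ` {1..n}"
  have apexes: "{Q. regular_simplex n (A(0 := Q))}
      = {Q. (\<forall>w\<in>W. (Q - G) \<bullet> w = 0) \<and> dist Q G = dist (A 0) G}"
    using regular_simplex_fun_upd_iff_sphere[OF reg \<open>2 \<le> n\<close>] by (auto simp: W_def G_def)
  then have orth: "\<forall>w\<in>W. (A 0 - G) \<bullet> w = 0"
    using reg by auto
  have "G \<in> affine hull (A ` {1..n})"
    using \<open>2 \<le> n\<close> unfolding G_def by (intro centroid_in_affine_hull) auto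
  moreover have "affine hull (A ` {1..n}) \<subseteq> affine hull (A ` {0..n})"
    by (intro hull_mono) auto
  ultimately have "G \<in> affine hull (A ` {0..n})"
    by blast
  moreover have "A i \<in> affine hull (A ` {0..n})" if "i \<le> n" for i
    using that by (intro hull_inc) auto
  ultimately have "dim (insert (A 0 - G) W) < card (A ` {0..n})"
    by (intro dim_diffs_affine_hull_less_card) (auto simp: W_def)
  also have "\<dots> \<le> DIM('a)"
    using card_image_le[of "{0..n}" A] \<open>n + 1 \<le> DIM('a)\<close> by simp
  finally show ?thesis
    unfolding apexes using orth by (intro dist_image_sphere_orthogonal)
qed

lemma regular_simplex_reflect_apex:
  fixes n :: nat and A :: "nat \<Rightarrow> 'a::euclidean_space"
  defines "G \<equiv> centroid {1..n} A" and "Q0 \<equiv> reflect_in (affine hull (A ` {1..n})) (A 0)"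
  assumes reg: "regular_simplex n A" and "2 \<le> n"
  shows "regular_simplex n (A(0 := Q0))" and "dist Q0 (A 0) = 2 * dist (A 0) G"
proof -
  note apex_iff = regular_simplex_fun_upd_iff_sphere[OF reg \<open>2 \<le> n\<close>, folded G_def]
  have orth: "\<forall>i\<in>{1..n}. (A 0 - G) \<bullet> (A i - G) = 0"
    using apex_iff[of "A 0"] reg by simp
  then have "closest_point (affine hull (A ` {1..n})) (A 0) = G"
    using \<open>2 \<le> n\<close> unfolding G_def
    by (intro closest_point_affine_hull_orthogonal centroid_in_affine_hull) auto
  then have "Q0 - G = - (A 0 - G)" and "Q0 - A 0 = - 2 *\<^sub>R (A 0 - G)"
    by (simp_all add: Q0_def reflect_in_def scaleR_2 algebra_simps)
  then show "regular_simplex n (A(0 := Q0))" and "dist Q0 (A 0) = 2 * dist (A 0) G"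
    using orth by (auto simp: apex_iff dist_norm simp del: minus_diff_eq)
qed

theorem theorem5p2:
  fixes n :: nat and A :: "nat \<Rightarrow> 'a::euclidean_space" and u R :: real
  assumes "n \<ge> 2"
    and "DIM('a) \<ge> n + 1"
    and "regular_simplex n A"
    and "u = dist (A 0) (A 1)"
    and "R = circumradius n A"
  defines "Q0 \<equiv> reflect_in (affine hull (A ` {1..n})) (A 0)"
    and "\<Omega> \<equiv> {Q. regular_simplex n (A(0 := Q))}"
  shows "(\<lambda>Q. dist Q (A 0)) ` \<Omega> = {0 .. sqrt (2 * (real n + 1) / real n) * u}
     \<and> (\<lambda>Q. dist Q (A 0)) ` \<Omega> = {0 .. 2 * (real n + 1) / real n * R}
     \<and> A 0 \<in> \<Omega> \<and> dist (A 0) (A 0) = 0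
     \<and> Q0 \<in> \<Omega> \<and> dist Q0 (A 0) = sqrt (2 * (real n + 1) / real n) * u"
proof -
  have "1 \<le> n"
    using \<open>n \<ge> 2\<close> by simp
  have "sqrt (2 * (real n + 1) / real n) = 2 * sqrt ((real n + 1) / (2 * real n))"
    using \<open>1 \<le> n\<close> by (intro real_sqrt_unique) (simp_all add: power_mult_distrib field_simps)
  then have diam: "2 * dist (A 0) (centroid {1..n} A) = sqrt (2 * (real n + 1) / real n) * u"
    using regular_simplex_height[OF assms(3) \<open>1 \<le> n\<close>] by (simp add: assms(4))
  have "sqrt (2 * (real n + 1) / real n)
      = 2 * (real n + 1) / real n * sqrt (real n / (2 * (real n + 1)))"
    using \<open>1 \<le> n\<close> by (intro sqrt_divide_eq_divide_mult_sqrt) auto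
  then have "2 * (real n + 1) / real n * R = sqrt (2 * (real n + 1) / real n) * u"
    using regular_simplex_circumradius[OF assms(3) \<open>1 \<le> n\<close>] by (simp add: assms(4,5))
  then show ?thesis
    using regular_simplex_apex_dist_image[OF assms(3,1,2)] regular_simplex_reflect_apex[OF assms(3,1)]
      diam assms(3) by (simp add: \<Omega>_def Q0_def)
qed

end
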